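(* For $k\ge2$, let $\mathcal B'$ be the set of $k\times k$ symmetric matrices over $\mathbb F_2$ of rank $k-2$ with every row sum $0$. Then $\#\mathcal B'=2^{\binom{k-1}{2}}\,u_{k-1}\,(2^{k-1}-1)$, where $u_j=\prod_{i=1}^{\lfloor j/2\rfloor}(1-2^{1-2i})$. *)

theory Defs
  imports "HOL-Library.Z2" "Jordan_Normal_Form.DL_Rank"
begin

text \<open>F_2 is the field type bit (HOL-Library.Z2); matrices and rank are those of
  Jordan_Normal_Form (rank = dimension of the column span).\<close>

definition u :: "nat \<Rightarrow> real" where
  "u j = (\<Prod>i = 1..j div 2. (1 - 2 powr (1 - 2 * real i)))"

end

theory Submission
  imports Defs "Berlekamp_Zassenhaus.Berlekamp_Type_Based"
begin

text \<open>Over a finite field a square matrix of size n and rank r has a kernel with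
  CARD('a)^(n - r) elements, so the rank condition is a condition on the kernel size.
  Write a symmetric matrix of size n + 1 in bordered form [[a, b^T], [b, C]]. Zero row sums
  force b = - C 1 and a = 1^T C 1, and then the kernel is that of C, shifted along the
  all-ones vector and one dimension larger. So the matrices counted correspond to the
  symmetric matrices of size k - 1 and nullity 1 over F_2.

  Let N(n, d) be the number of symmetric n x n matrices over F_2 of nullity d. Classifying
  the borderings of C: for a = 1 the kernel is that of C - b b^T; for a = 0, b = 0 the
  nullity grows by one; for a = 0, b \<noteq> 0 a congruence moves b to the first unit vector,
  after which the kernel is that of the inner block of C. Hence
  N(n+2, d) = 2^(n+1) N(n+1, d) + N(n+1, d-1) + (2^(n+1) - 1) 2^(n+1) N(n, d),
  which is solved by N(n, 0) = 2^((n+1) choose 2) u(n+1) and N(n+1, 1) = (2^(n+1) - 1) N(n, 0).\<close>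

declare add_bit_eq_xor[simp del] mult_bit_eq_and[simp del]
  \<comment> \<open>keep F_2 arithmetic as field arithmetic instead of XOR and AND\<close>

section \<open>Kernels over finite fields\<close>

lemma (in vectorspace) card_carrier_basis:
  assumes fin: "finite B" and bas: "basis B"
  shows "card (carrier V) = card (carrier K) ^ card B"
proof -
  have B: "B \<subseteq> carrier V" using bas unfolding basis_def by auto
  have unique: "\<And>v. v \<in> carrier V \<Longrightarrow> \<exists>!a. a \<in> B \<rightarrow>\<^sub>E carrier K \<and> lincomb a B = v"
    using basis_criterion[OF fin B] bas by blast
  have "bij_betw (\<lambda>a. lincomb a B) (B \<rightarrow>\<^sub>E carrier K) (carrier V)"
  proof (rule bij_betwI')
    fix a b assume a: "a \<in> B \<rightarrow>\<^sub>E carrier K" and b: "b \<in> B \<rightarrow>\<^sub>E carrier K"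
    have "lincomb a B \<in> carrier V" using a B by (intro lincomb_closed) auto
    then show "(lincomb a B = lincomb b B) = (a = b)" using unique a b by metis
  next
    fix a assume "a \<in> B \<rightarrow>\<^sub>E carrier K"
    then show "lincomb a B \<in> carrier V" using B by (intro lincomb_closed) auto
  next
    fix v assume "v \<in> carrier V"
    then show "\<exists>a\<in>B \<rightarrow>\<^sub>E carrier K. v = lincomb a B" using unique by metis
  qed
  then have "card (carrier V) = card (B \<rightarrow>\<^sub>E carrier K)" by (simp add: bij_betw_same_card)
  also have "\<dots> = card (carrier K) ^ card B" using fin by (simp add: card_PiE)
  finally show ?thesis .
qed

lemma card_mat_vec_image:
  fixes A :: "'a :: {finite, field} mat"
  assumes A: "A \<in> carrier_mat nr nc"
  shows "card ((*\<^sub>v) A ` carrier_vec nc) = CARD('a) ^ vec_space.rank nr A"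
proof -
  interpret V: vec_space "TYPE('a)" nr .
  let ?W = "V.vs (V.col_space A)"
  have image: "V.col_space A = (*\<^sub>v) A ` carrier_vec nc"
    using V.col_space_eq[OF A] A by auto
  have cols: "set (cols A) \<subseteq> carrier_vec nr" using cols_dim[of A] A by auto
  have W: "vectorspace class_ring ?W"
    unfolding V.col_space_def using V.span_is_subspace[OF cols] V.subspace_is_vs by simp
  obtain \<beta> where fin: "finite \<beta>" and bas: "vectorspace.basis class_ring ?W \<beta>"
    using vectorspace.finite_basis_exists[OF W] V.fin_dim_span_cols[OF A]
    unfolding V.col_space_def by blast
  have "vec_space.rank nr A = card \<beta>"
    using vectorspace.dim_basis[OF W fin bas] unfolding V.rank_def V.col_space_def by simp
  moreover have "card (V.col_space A) = CARD('a) ^ card \<beta>"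
    using vectorspace.card_carrier_basis[OF W fin bas] by (simp add: class_ring_simps)
  ultimately show ?thesis using image by simp
qed

lemma card_mat_vec_fibre:
  fixes A :: "'a :: comm_ring_1 mat"
  assumes A: "A \<in> carrier_mat nr nc" and x0: "x0 \<in> carrier_vec nc"
  shows "card {x \<in> carrier_vec nc. A *\<^sub>v x = A *\<^sub>v x0} = card (mat_kernel A)"
proof -
  let ?F = "{x \<in> carrier_vec nc. A *\<^sub>v x = A *\<^sub>v x0}"
  have "bij_betw (\<lambda>z. z + x0) (mat_kernel A) ?F"
  proof (rule bij_betw_byWitness[where f' = "\<lambda>x. x - x0"])
    show "\<forall>z\<in>mat_kernel A. z + x0 - x0 = z"
      using x0 mat_kernel[OF A] by auto
    show "\<forall>x\<in>?F. x - x0 + x0 = x"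
      using x0 by auto
    show "(\<lambda>z. z + x0) ` mat_kernel A \<subseteq> ?F"
      using x0 A unfolding mat_kernel[OF A] by (auto simp: mult_add_distrib_mat_vec)
    show "(\<lambda>x. x - x0) ` ?F \<subseteq> mat_kernel A"
      using x0 A unfolding mat_kernel[OF A] by (auto simp: mult_minus_distrib_mat_vec)
  qed
  then show ?thesis by (simp add: bij_betw_same_card)
qed

lemma card_carrier_vec_eq_image_times_kernel:
  fixes A :: "'a :: {finite, comm_ring_1} mat"
  assumes A: "A \<in> carrier_mat nr nc"
  shows "card (carrier_vec nc :: 'a vec set) = card ((*\<^sub>v) A ` carrier_vec nc) * card (mat_kernel A)"
proof -
  let ?F = "\<lambda>y. {x \<in> carrier_vec nc. A *\<^sub>v x = y}"
  have "card (\<Union>y\<in>(*\<^sub>v) A ` carrier_vec nc. ?F y) = (\<Sum>y\<in>(*\<^sub>v) A ` carrier_vec nc. card (?F y))"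
    by (rule card_UN_disjoint) auto
  moreover have "(\<Union>y\<in>(*\<^sub>v) A ` carrier_vec nc. ?F y) = carrier_vec nc" by auto
  ultimately have "card (carrier_vec nc :: 'a vec set) = (\<Sum>y\<in>(*\<^sub>v) A ` carrier_vec nc. card (?F y))"
    by simp
  also have "\<dots> = (\<Sum>y\<in>(*\<^sub>v) A ` carrier_vec nc. card (mat_kernel A))"
    using card_mat_vec_fibre[OF A] by (intro sum.cong) auto
  finally show ?thesis by simp
qed

lemma card_mat_kernel:
  fixes A :: "'a :: {finite, field} mat"
  assumes A: "A \<in> carrier_mat nr nc"
  shows "card (mat_kernel A) = CARD('a) ^ (nc - vec_space.rank nr A)"
proof -
  have "CARD('a) ^ (nc - vec_space.rank nr A) * CARD('a) ^ vec_space.rank nr A = CARD('a) ^ nc"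
    using vec_space.rank_le_nc[OF A] by (simp flip: power_add)
  also have "\<dots> = card (mat_kernel A) * CARD('a) ^ vec_space.rank nr A"
    using card_carrier_vec_eq_image_times_kernel[OF A] card_mat_vec_image[OF A]
    by (simp add: card_carrier_vec)
  finally show ?thesis by simp
qed

lemma rank_eq_iff_card_mat_kernel:
  fixes A :: "'a :: {finite, field} mat"
  assumes A: "A \<in> carrier_mat nr nc" and d: "d \<le> nc"
  shows "vec_space.rank nr A = nc - d \<longleftrightarrow> card (mat_kernel A) = CARD('a) ^ d"
proof -
  have "1 < CARD('a)"
    using card_mono[of UNIV "{0, 1 :: 'a}"] by simp
  then have "card (mat_kernel A) = CARD('a) ^ d \<longleftrightarrow> nc - vec_space.rank nr A = d"
    unfolding card_mat_kernel[OF A] by (rule power_inject_exp)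
  then show ?thesis using vec_space.rank_le_nc[OF A] d by auto
qed

lemma carrier_vec_SucE:
  assumes "x \<in> carrier_vec (Suc n)"
  obtains t y where "x = vCons t y" and "y \<in> carrier_vec n"
  using assms by (cases x) auto

lemma smult_vCons[simp]: "t \<cdot>\<^sub>v vCons a v = vCons (t * a) (t \<cdot>\<^sub>v v)"
  by (intro eq_vecI) (auto simp: vec_index_vCons)

lemma add_vCons[simp]: "dim_vec v = dim_vec w \<Longrightarrow> vCons a v + vCons b w = vCons (a + b) (v + w)"
  by (intro eq_vecI) (auto simp: vec_index_vCons)

lemma smult_zero_vec[simp]: "a \<cdot>\<^sub>v 0\<^sub>v n = (0\<^sub>v n :: 'a :: mult_zero vec)"
  by (intro eq_vecI) auto

lemma zero_smult_vec[simp]: "(0 :: 'a :: mult_zero) \<cdot>\<^sub>v v = 0\<^sub>v (dim_vec v)"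
  by (intro eq_vecI) auto

lemma mult_mat_zero_vec[simp]: "A \<in> carrier_mat nr nc \<Longrightarrow> A *\<^sub>v 0\<^sub>v nc = (0\<^sub>v nr :: 'a :: semiring_0 vec)"
  by (intro eq_vecI) (auto simp: mult_mat_vec_def scalar_prod_def)

definition ones_vec :: "nat \<Rightarrow> 'a :: one vec" where
  "ones_vec n = vec n (\<lambda>_. 1)"

lemma ones_vec_carrier[simp]: "ones_vec n \<in> carrier_vec n"
  and dim_ones_vec[simp]: "dim_vec (ones_vec n) = n"
  and index_ones_vec[simp]: "i < n \<Longrightarrow> ones_vec n $ i = 1"
  by (simp_all add: ones_vec_def)

lemma ones_vec_Suc: "ones_vec (Suc n) = vCons 1 (ones_vec n)"
  by (simp add: ones_vec_def vec_Suc o_def)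

lemma row_sums_eq_0_iff_mult_ones_vec:
  fixes A :: "'a :: semiring_1 mat"
  assumes "A \<in> carrier_mat nr nc"
  shows "(\<forall>i<nr. (\<Sum>j<nc. A $$ (i, j)) = 0) \<longleftrightarrow> A *\<^sub>v ones_vec nc = 0\<^sub>v nr"
  using assms by (auto simp: vec_eq_iff mult_mat_vec_def scalar_prod_def row_def atLeast0LessThan)

definition outer_mat :: "'a :: times vec \<Rightarrow> 'a vec \<Rightarrow> 'a mat" where
  "outer_mat w v = mat (dim_vec w) (dim_vec v) (\<lambda>(i, j). w $ i * v $ j)"

lemma outer_mat_carrier[simp]:
  "w \<in> carrier_vec n \<Longrightarrow> v \<in> carrier_vec m \<Longrightarrow> outer_mat w v \<in> carrier_mat n m"
  by (simp add: outer_mat_def)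

lemma outer_mat_mult_vec:
  fixes w :: "'a :: comm_semiring_0 vec"
  assumes "x \<in> carrier_vec (dim_vec v)"
  shows "outer_mat w v *\<^sub>v x = (v \<bullet> x) \<cdot>\<^sub>v w"
  using assms
  by (intro eq_vecI) (auto simp: outer_mat_def mult_mat_vec_def scalar_prod_def row_def
      sum_distrib_left ac_simps)

lemma invertible_mat_of_mult_vec_inj:
  fixes U :: "'a :: field mat"
  assumes U: "U \<in> carrier_mat n n"
    and inj: "\<And>x. x \<in> carrier_vec n \<Longrightarrow> U *\<^sub>v x = 0\<^sub>v n \<Longrightarrow> x = 0\<^sub>v n"
  obtains U' where "U' \<in> carrier_mat n n" "U' * U = 1\<^sub>m n" "U * U' = 1\<^sub>m n"
proof -
  have "det U \<noteq> 0" using det_0_iff_vec_prod_zero_field[OF U] inj by auto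
  from det_non_zero_imp_unit[OF U this] show ?thesis
    using that unfolding Units_def ring_mat_def by auto
qed

section \<open>Bordered matrices\<close>

definition border_mat :: "nat \<Rightarrow> 'a \<Rightarrow> 'a vec \<Rightarrow> 'a mat \<Rightarrow> 'a mat" where
  "border_mat n a b C = mat (Suc n) (Suc n) (\<lambda>(i, j).
     if i = 0 then (if j = 0 then a else b $ (j - 1))
     else if j = 0 then b $ (i - 1) else C $$ (i - 1, j - 1))"

lemma border_mat_carrier[simp]: "border_mat n a b C \<in> carrier_mat (Suc n) (Suc n)"
  and dim_border_mat[simp]: "dim_row (border_mat n a b C) = Suc n" "dim_col (border_mat n a b C) = Suc n"
  by (simp_all add: border_mat_def)

lemma border_mat_inj:
  assumes eq: "border_mat n a b C = border_mat n a' b' C'"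
    and "b \<in> carrier_vec n" "b' \<in> carrier_vec n" "C \<in> carrier_mat n n" "C' \<in> carrier_mat n n"
  shows "a = a' \<and> b = b' \<and> C = C'"
proof -
  have e: "border_mat n a b C $$ (i, j) = border_mat n a' b' C' $$ (i, j)" for i j
    using eq by simp
  have "a = a'" using e[of 0 0] by (simp add: border_mat_def)
  moreover have "b = b'"
  proof (rule eq_vecI)
    fix i assume "i < dim_vec b'"
    then show "b $ i = b' $ i" using e[of 0 "Suc i"] assms by (simp add: border_mat_def)
  qed (use assms in simp)
  moreover have "C = C'"
  proof (rule eq_matI)
    fix i j assume "i < dim_row C'" "j < dim_col C'"
    then show "C $$ (i, j) = C' $$ (i, j)" using e[of "Suc i" "Suc j"] assms by (simp add: border_mat_def)
  qed (use assms in auto)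
  ultimately show ?thesis by simp
qed

lemma border_mat_mult_vCons:
  fixes C :: "'a :: comm_ring_1 mat"
  assumes b: "b \<in> carrier_vec n" and C: "C \<in> carrier_mat n n" and y: "y \<in> carrier_vec n"
  shows "border_mat n a b C *\<^sub>v vCons t y = vCons (a * t + b \<bullet> y) (t \<cdot>\<^sub>v b + C *\<^sub>v y)"
proof (rule eq_vecI)
  fix i assume "i < dim_vec (vCons (a * t + b \<bullet> y) (t \<cdot>\<^sub>v b + C *\<^sub>v y))"
  then have i: "i < Suc n" using b C by simp
  have "(border_mat n a b C *\<^sub>v vCons t y) $ i
      = (\<Sum>k = 0..<Suc n. border_mat n a b C $$ (i, k) * vCons t y $ k)"
    using i y unfolding mult_mat_vec_def scalar_prod_def by (simp add: row_def)
  also have "\<dots> = border_mat n a b C $$ (i, 0) * t + (\<Sum>k = 0..<n. border_mat n a b C $$ (i, Suc k) * y $ k)"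
    by (subst sum.atLeast0_lessThan_Suc_shift) simp
  also have "\<dots> = vCons (a * t + b \<bullet> y) (t \<cdot>\<^sub>v b + C *\<^sub>v y) $ i"
    using i b C y
    by (cases i) (auto simp: border_mat_def scalar_prod_def mult_mat_vec_def row_def mult.commute
        intro!: sum.cong)
  finally show "(border_mat n a b C *\<^sub>v vCons t y) $ i = vCons (a * t + b \<bullet> y) (t \<cdot>\<^sub>v b + C *\<^sub>v y) $ i" .
qed (use b C y in simp)

lemma border_mat_mult_ones_vec_eq_0_iff:
  fixes C :: "'a :: comm_ring_1 mat"
  assumes b: "b \<in> carrier_vec n" and C: "C \<in> carrier_mat n n"
  shows "border_mat n a b C *\<^sub>v ones_vec (Suc n) = 0\<^sub>v (Suc n)
    \<longleftrightarrow> b = - (C *\<^sub>v ones_vec n) \<and> a = ones_vec n \<bullet> (C *\<^sub>v ones_vec n)"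
proof -
  let ?c = "C *\<^sub>v ones_vec n"
  have "b + ?c = 0\<^sub>v n \<longleftrightarrow> b = - ?c"
    using b C by (auto simp: vec_eq_iff eq_neg_iff_add_eq_0)
  moreover have "b = - ?c \<Longrightarrow> a + b \<bullet> ones_vec n = 0 \<longleftrightarrow> a = ones_vec n \<bullet> ?c"
    using C comm_scalar_prod[of ?c n "ones_vec n"] by (auto simp: eq_neg_iff_add_eq_0)
  ultimately show ?thesis
    using b C by (auto simp: ones_vec_Suc border_mat_mult_vCons zero_vec_Suc)
qed

definition border_kernel :: "nat \<Rightarrow> 'a :: comm_ring_1 \<Rightarrow> 'a vec \<Rightarrow> 'a mat \<Rightarrow> ('a \<times> 'a vec) set" where
  \<comment> \<open>the kernel of border_mat n a b C in the coordinates vCons t y\<close>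
  "border_kernel n a b C =
     {(t, y). y \<in> carrier_vec n \<and> a * t + b \<bullet> y = 0 \<and> t \<cdot>\<^sub>v b + C *\<^sub>v y = 0\<^sub>v n}"

lemma card_mat_kernel_border_mat:
  fixes C :: "'a :: comm_ring_1 mat"
  assumes b: "b \<in> carrier_vec n" and C: "C \<in> carrier_mat n n"
  shows "card (mat_kernel (border_mat n a b C)) = card (border_kernel n a b C)"
proof -
  have "mat_kernel (border_mat n a b C) = (\<lambda>(t, y). vCons t y) ` border_kernel n a b C"
  proof (intro equalityI subsetI)
    fix x assume x: "x \<in> mat_kernel (border_mat n a b C)"
    then have "x \<in> carrier_vec (Suc n)" by (simp add: mat_kernel_def)
    then obtain t y where xe: "x = vCons t y" and y: "y \<in> carrier_vec n"
      by (rule carrier_vec_SucE)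
    then have "(t, y) \<in> border_kernel n a b C"
      using x border_mat_mult_vCons[OF b C y] unfolding mat_kernel_def border_kernel_def
      by (simp add: zero_vec_Suc)
    then show "x \<in> (\<lambda>(t, y). vCons t y) ` border_kernel n a b C" using xe by force
  next
    fix x assume "x \<in> (\<lambda>(t, y). vCons t y) ` border_kernel n a b C"
    then obtain t y where "x = vCons t y" "(t, y) \<in> border_kernel n a b C" by auto
    then show "x \<in> mat_kernel (border_mat n a b C)"
      using border_mat_mult_vCons[OF b C] unfolding mat_kernel_def border_kernel_def
      by (auto simp: zero_vec_Suc)
  qed
  moreover have "inj_on (\<lambda>(t, y). vCons t y) (border_kernel n a b C)"
    by (auto simp: inj_on_def)
  ultimately show ?thesis by (simp add: card_image)
qed

lemma card_mat_kernel_border_mat_zero: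
  fixes C :: "'a :: {finite, field} mat"
  assumes C: "C \<in> carrier_mat n n"
  shows "card (mat_kernel (border_mat n 0 (0\<^sub>v n) C)) = CARD('a) * card (mat_kernel C)"
proof -
  have "border_kernel n 0 (0\<^sub>v n) C = UNIV \<times> mat_kernel C"
    using C unfolding border_kernel_def mat_kernel_def by auto
  then show ?thesis
    using card_mat_kernel_border_mat[OF zero_carrier_vec C] by (simp add: card_cartesian_product)
qed

lemma card_mat_kernel_border_mat_one:
  fixes C :: "'a :: field mat"
  assumes b: "b \<in> carrier_vec n" and C: "C \<in> carrier_mat n n"
  shows "card (mat_kernel (border_mat n 1 b C)) = card (mat_kernel (C - outer_mat b b))"
proof -
  have O: "outer_mat b b \<in> carrier_mat n n" using b by auto
  have CO: "(C - outer_mat b b) *\<^sub>v y = (- (b \<bullet> y)) \<cdot>\<^sub>v b + C *\<^sub>v y" if y: "y \<in> carrier_vec n" for y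
    using minus_mult_distrib_mat_vec[OF C O y] outer_mat_mult_vec[of y b b] y b C
    by (intro eq_vecI) auto
  have K: "mat_kernel (C - outer_mat b b) = {y \<in> carrier_vec n. (C - outer_mat b b) *\<^sub>v y = 0\<^sub>v n}"
    by (rule mat_kernel) (rule minus_carrier_mat[OF O])
  have "border_kernel n 1 b C = (\<lambda>y. (- (b \<bullet> y), y)) ` mat_kernel (C - outer_mat b b)"
  proof (intro equalityI subsetI)
    fix p assume "p \<in> border_kernel n 1 b C"
    then obtain t y where p: "p = (t, y)" and y: "y \<in> carrier_vec n"
      and t: "t + b \<bullet> y = 0" and Cy: "t \<cdot>\<^sub>v b + C *\<^sub>v y = 0\<^sub>v n"
      unfolding border_kernel_def by auto
    from t have "t = - (b \<bullet> y)" by (simp add: eq_neg_iff_add_eq_0)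
    with y Cy CO[OF y] C show "p \<in> (\<lambda>y. (- (b \<bullet> y), y)) ` mat_kernel (C - outer_mat b b)"
      unfolding p K by auto
  next
    fix p assume "p \<in> (\<lambda>y. (- (b \<bullet> y), y)) ` mat_kernel (C - outer_mat b b)"
    then show "p \<in> border_kernel n 1 b C"
      using CO unfolding K border_kernel_def by auto
  qed
  moreover have "inj_on (\<lambda>y. (- (b \<bullet> y), y)) (mat_kernel (C - outer_mat b b))"
    by (auto simp: inj_on_def)
  ultimately show ?thesis using card_mat_kernel_border_mat[OF b C] by (simp add: card_image)
qed

lemma card_mat_kernel_border_mat_unit:
  fixes E :: "'a :: field mat"
  assumes d: "d \<in> carrier_vec n" and E: "E \<in> carrier_mat n n"
  shows "card (mat_kernel (border_mat (Suc n) 0 (vCons 1 (0\<^sub>v n)) (border_mat n c d E)))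
    = card (mat_kernel E)"
proof -
  let ?e = "vCons (1 :: 'a) (0\<^sub>v n)"
  have in_kernel_iff: "(t, vCons s z) \<in> border_kernel (Suc n) 0 ?e (border_mat n c d E)
      \<longleftrightarrow> s = 0 \<and> t = - (d \<bullet> z) \<and> z \<in> mat_kernel E" if z: "z \<in> carrier_vec n" for t s z
    using z d E border_mat_mult_vCons[OF d E z, of c s]
    by (auto simp: border_kernel_def mat_kernel_def zero_vec_Suc eq_neg_iff_add_eq_0)
  have "border_kernel (Suc n) 0 ?e (border_mat n c d E) = (\<lambda>z. (- (d \<bullet> z), vCons 0 z)) ` mat_kernel E"
  proof (intro equalityI subsetI)
    fix p assume p: "p \<in> border_kernel (Suc n) 0 ?e (border_mat n c d E)"
    then obtain t y where pe: "p = (t, y)" and "y \<in> carrier_vec (Suc n)"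
      unfolding border_kernel_def by auto
    then obtain s z where y: "y = vCons s z" and z: "z \<in> carrier_vec n"
      by (elim carrier_vec_SucE)
    show "p \<in> (\<lambda>z. (- (d \<bullet> z), vCons 0 z)) ` mat_kernel E"
      using p in_kernel_iff[OF z] unfolding pe y by auto
  next
    fix p assume "p \<in> (\<lambda>z. (- (d \<bullet> z), vCons 0 z)) ` mat_kernel E"
    then show "p \<in> border_kernel (Suc n) 0 ?e (border_mat n c d E)"
      using in_kernel_iff E by (auto simp: mat_kernel_def)
  qed
  moreover have "inj_on (\<lambda>z. (- (d \<bullet> z), vCons (0 :: 'a) z)) (mat_kernel E)"
    by (auto simp: inj_on_def)
  ultimately show ?thesis
    using card_mat_kernel_border_mat[of ?e "Suc n" "border_mat n c d E" 0] d E
    by (simp add: card_image)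
qed

lemma border_kernel_congruence_iff:
  fixes C U U' :: "'a :: field mat"
  assumes b: "b \<in> carrier_vec n" and C: "C \<in> carrier_mat n n"
    and U: "U \<in> carrier_mat n n" and U': "U' \<in> carrier_mat n n" and inv: "U' * U = 1\<^sub>m n"
    and z: "z \<in> carrier_vec n"
  shows "(t, z) \<in> border_kernel n a (U *\<^sub>v b) (U * C * transpose_mat U)
    \<longleftrightarrow> (t, transpose_mat U *\<^sub>v z) \<in> border_kernel n a b C"
proof -
  let ?T = "transpose_mat U"
  have T: "?T \<in> carrier_mat n n" using U by simp
  have U_inj: "U *\<^sub>v w = 0\<^sub>v n \<longleftrightarrow> w = 0\<^sub>v n" if w: "w \<in> carrier_vec n" for w
  proof
    assume "U *\<^sub>v w = 0\<^sub>v n"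
    then have "(U' * U) *\<^sub>v w = 0\<^sub>v n" using U U' w by simp
    then show "w = 0\<^sub>v n" using inv w by simp
  qed (use U in simp)
  have "(U *\<^sub>v b) \<bullet> z = b \<bullet> (?T *\<^sub>v z)"
    using transpose_vec_mult_scalar[OF T z b] by simp
  moreover have "(U * C * ?T) *\<^sub>v z = U *\<^sub>v (C *\<^sub>v (?T *\<^sub>v z))"
    using assoc_mult_mat_vec[OF mult_carrier_mat[OF U C] T z] U C T z by simp
  then have "t \<cdot>\<^sub>v (U *\<^sub>v b) + (U * C * ?T) *\<^sub>v z = U *\<^sub>v (t \<cdot>\<^sub>v b + C *\<^sub>v (?T *\<^sub>v z))"
    using U C T b z by (simp add: mult_add_distrib_mat_vec[OF U] mult_mat_vec[OF U])
  ultimately show ?thesis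
    using U_inj[of "t \<cdot>\<^sub>v b + C *\<^sub>v (?T *\<^sub>v z)"] z T b C
    by (simp add: border_kernel_def)
qed

lemma card_mat_kernel_border_mat_congruence:
  fixes C U U' :: "'a :: field mat"
  assumes b: "b \<in> carrier_vec n" and C: "C \<in> carrier_mat n n"
    and U: "U \<in> carrier_mat n n" and U': "U' \<in> carrier_mat n n"
    and inv1: "U' * U = 1\<^sub>m n" and inv2: "U * U' = 1\<^sub>m n"
  shows "card (mat_kernel (border_mat n a (U *\<^sub>v b) (U * C * transpose_mat U)))
    = card (mat_kernel (border_mat n a b C))"
proof -
  let ?T = "transpose_mat U" and ?T' = "transpose_mat U'"
  note in_kernel_iff = border_kernel_congruence_iff[OF b C U U' inv1]
  have T: "?T \<in> carrier_mat n n" and T': "?T' \<in> carrier_mat n n" using U U' by auto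
  have "?T * ?T' = 1\<^sub>m n" using transpose_mult[OF U' U] inv1 by simp
  moreover have "?T' * ?T = 1\<^sub>m n" using transpose_mult[OF U U'] inv2 by simp
  ultimately have TT': "?T *\<^sub>v (?T' *\<^sub>v y) = y" and T'T: "?T' *\<^sub>v (?T *\<^sub>v y) = y"
    if "y \<in> carrier_vec n" for y
    using that assoc_mult_mat_vec[OF T T'] assoc_mult_mat_vec[OF T' T] by simp_all
  have "bij_betw (\<lambda>(t, z). (t, ?T *\<^sub>v z))
      (border_kernel n a (U *\<^sub>v b) (U * C * ?T)) (border_kernel n a b C)"
  proof (rule bij_betw_byWitness[where f' = "\<lambda>(t, y). (t, ?T' *\<^sub>v y)"])
    show "(\<lambda>(t, z). (t, ?T *\<^sub>v z)) ` border_kernel n a (U *\<^sub>v b) (U * C * ?T) \<subseteq> border_kernel n a b C"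
      using in_kernel_iff by (auto simp: border_kernel_def)
    show "(\<lambda>(t, y). (t, ?T' *\<^sub>v y)) ` border_kernel n a b C \<subseteq> border_kernel n a (U *\<^sub>v b) (U * C * ?T)"
      using in_kernel_iff T' TT' by (fastforce simp: border_kernel_def)
  qed (use TT' T'T in \<open>auto simp: border_kernel_def\<close>)
  then have "card (border_kernel n a (U *\<^sub>v b) (U * C * ?T)) = card (border_kernel n a b C)"
    by (rule bij_betw_same_card)
  moreover have "U *\<^sub>v b \<in> carrier_vec n" "U * C * ?T \<in> carrier_mat n n" using U C T b by auto
  ultimately show ?thesis
    using card_mat_kernel_border_mat[OF b C] card_mat_kernel_border_mat[of "U *\<^sub>v b" n "U * C * ?T"]
    by simp
qed

lemma border_kernel_row_sums_iff:
  fixes B :: "'a :: field mat"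
  assumes B: "B \<in> carrier_mat n n" and sym: "transpose_mat B = B" and y: "y \<in> carrier_vec n"
  shows "(t, y) \<in> border_kernel n (ones_vec n \<bullet> (B *\<^sub>v ones_vec n)) (- (B *\<^sub>v ones_vec n)) B
    \<longleftrightarrow> y - t \<cdot>\<^sub>v ones_vec n \<in> mat_kernel B"
proof -
  let ?e = "ones_vec n :: 'a vec"
  let ?c = "B *\<^sub>v ?e"
  have c: "?c \<in> carrier_vec n" using B by simp
  define w where "w = y - t \<cdot>\<^sub>v ?e"
  have w: "w \<in> carrier_vec n" using y by (simp add: w_def)
  have Bw: "B *\<^sub>v w = t \<cdot>\<^sub>v (- ?c) + B *\<^sub>v y"
    using y B by (intro eq_vecI) (auto simp: w_def mult_minus_distrib_mat_vec mult_mat_vec)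
  \<comment> \<open>by symmetry of B the first row of the kernel equations follows from the others\<close>
  have "?c \<bullet> w = ?e \<bullet> (B *\<^sub>v w)"
    using transpose_vec_mult_scalar[OF B w ones_vec_carrier] sym by simp
  moreover have "(- ?c) \<bullet> y = - (?c \<bullet> y)"
    by (rule scalar_prod_uminus_left) (use B y in auto)
  then have "(?e \<bullet> ?c) * t + (- ?c) \<bullet> y = - (?c \<bullet> w)"
    using y c comm_scalar_prod[OF c ones_vec_carrier]
    by (simp add: w_def scalar_prod_minus_distrib algebra_simps)
  ultimately have "(?e \<bullet> ?c) * t + (- ?c) \<bullet> y = - (?e \<bullet> (B *\<^sub>v w))" by simp
  then show ?thesis
    using y w Bw B by (auto simp: border_kernel_def mat_kernel_def simp flip: w_def)
qed

lemma card_mat_kernel_border_mat_row_sums: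
  fixes B :: "'a :: {finite, field} mat"
  assumes B: "B \<in> carrier_mat n n" and sym: "transpose_mat B = B"
  shows "card (mat_kernel (border_mat n (ones_vec n \<bullet> (B *\<^sub>v ones_vec n)) (- (B *\<^sub>v ones_vec n)) B))
    = CARD('a) * card (mat_kernel B)"
proof -
  let ?e = "ones_vec n :: 'a vec"
  let ?K = "border_kernel n (?e \<bullet> (B *\<^sub>v ?e)) (- (B *\<^sub>v ?e)) B"
  note in_kernel_iff = border_kernel_row_sums_iff[OF B sym]
  have shift_cancel: "w + t \<cdot>\<^sub>v ?e - t \<cdot>\<^sub>v ?e = w" "w - t \<cdot>\<^sub>v ?e + t \<cdot>\<^sub>v ?e = w"
    if "w \<in> carrier_vec n" for w t
    using that by (auto intro!: eq_vecI)
  have "bij_betw (\<lambda>(t, w). (t, w + t \<cdot>\<^sub>v ?e)) (UNIV \<times> mat_kernel B) ?K"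
  proof (rule bij_betw_byWitness[where f' = "\<lambda>(t, y). (t, y - t \<cdot>\<^sub>v ?e)"])
    show "(\<lambda>(t, w). (t, w + t \<cdot>\<^sub>v ?e)) ` (UNIV \<times> mat_kernel B) \<subseteq> ?K"
    proof clarify
      fix t w assume w: "w \<in> mat_kernel B"
      then have "w \<in> carrier_vec n" using B by (simp add: mat_kernel_def)
      then show "(t, w + t \<cdot>\<^sub>v ?e) \<in> ?K"
        using in_kernel_iff[of "w + t \<cdot>\<^sub>v ?e" t] w shift_cancel by simp
    qed
    show "(\<lambda>(t, y). (t, y - t \<cdot>\<^sub>v ?e)) ` ?K \<subseteq> UNIV \<times> mat_kernel B"
      using in_kernel_iff by (auto simp: border_kernel_def)
  qed (use B shift_cancel in \<open>auto simp: border_kernel_def mat_kernel_def\<close>)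
  then have "card ((UNIV :: 'a set) \<times> mat_kernel B) = card ?K"
    by (rule bij_betw_same_card)
  then show ?thesis
    using card_mat_kernel_border_mat[of "- (B *\<^sub>v ?e)" n B] B by (simp add: card_cartesian_product)
qed

definition sym_mats :: "nat \<Rightarrow> 'a mat set" where
  "sym_mats n = {A \<in> carrier_mat n n. transpose_mat A = A}"

lemma sym_mats_carrier: "A \<in> sym_mats n \<Longrightarrow> A \<in> carrier_mat n n"
  by (simp add: sym_mats_def)

lemma sym_mats_index: "A \<in> sym_mats n \<Longrightarrow> i < n \<Longrightarrow> j < n \<Longrightarrow> A $$ (j, i) = A $$ (i, j)"
  unfolding sym_mats_def by (metis (mono_tags, lifting) carrier_matD index_transpose_mat(1) mem_Collect_eq)

lemma sym_matsI:
  "A \<in> carrier_mat n n \<Longrightarrow> (\<And>i j. i < n \<Longrightarrow> j < n \<Longrightarrow> A $$ (j, i) = A $$ (i, j)) \<Longrightarrow> A \<in> sym_mats n"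
  unfolding sym_mats_def by (auto intro!: eq_matI)

lemma finite_carrier_mat[simp]: "finite (carrier_mat nr nc :: 'a :: finite mat set)"
proof -
  have "carrier_mat nr nc \<subseteq> (\<lambda>f. mat nr nc f) ` ({..<nr} \<times> {..<nc} \<rightarrow>\<^sub>E (UNIV :: 'a set))"
  proof
    fix A :: "'a mat" assume A: "A \<in> carrier_mat nr nc"
    then have "A = mat nr nc (restrict (\<lambda>p. A $$ p) ({..<nr} \<times> {..<nc}))"
      by (intro eq_matI) auto
    then show "A \<in> (\<lambda>f. mat nr nc f) ` ({..<nr} \<times> {..<nc} \<rightarrow>\<^sub>E UNIV)" by fastforce
  qed
  then show ?thesis by (rule finite_subset) (simp add: finite_PiE)
qed

lemma finite_sym_mats[simp]: "finite (sym_mats n :: 'a :: finite mat set)"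
  by (rule finite_subset[OF _ finite_carrier_mat[of n n]]) (auto simp: sym_mats_def)

lemma border_mat_sym_mats: "b \<in> carrier_vec n \<Longrightarrow> C \<in> sym_mats n \<Longrightarrow> border_mat n a b C \<in> sym_mats (Suc n)"
  by (rule sym_matsI) (auto simp: border_mat_def sym_mats_index)

lemma sym_mats_SucE:
  assumes A: "A \<in> sym_mats (Suc n)"
  obtains a b C where "b \<in> carrier_vec n" "C \<in> sym_mats n" "A = border_mat n a b C"
proof
  let ?b = "vec n (\<lambda>j. A $$ (0, Suc j))" and ?C = "mat n n (\<lambda>(i, j). A $$ (Suc i, Suc j))"
  show "?b \<in> carrier_vec n" by simp
  show "?C \<in> sym_mats n" by (rule sym_matsI) (auto simp: sym_mats_index[OF A])
  show "A = border_mat n (A $$ (0, 0)) ?b ?C"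
  proof (rule eq_matI)
    fix i j assume "i < dim_row (border_mat n (A $$ (0, 0)) ?b ?C)" "j < dim_col (border_mat n (A $$ (0, 0)) ?b ?C)"
    then show "A $$ (i, j) = border_mat n (A $$ (0, 0)) ?b ?C $$ (i, j)"
      using sym_mats_index[OF A, of 0 i] by (cases i; cases j) (auto simp: border_mat_def)
  qed (use sym_mats_carrier[OF A] in auto)
qed

lemma card_sym_mats_Suc:
  fixes P :: "'a :: {finite, zero} mat \<Rightarrow> bool"
  shows "card {A \<in> sym_mats (Suc n). P A}
    = (\<Sum>a\<in>UNIV. \<Sum>b\<in>carrier_vec n. card {C \<in> sym_mats n. P (border_mat n a b C)})"
proof -
  let ?S = "SIGMA a:UNIV. SIGMA b:carrier_vec n. {C \<in> sym_mats n. P (border_mat n a b C)}"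
  have "{A \<in> sym_mats (Suc n). P A} = (\<lambda>(a, b, C). border_mat n a b C) ` ?S"
  proof (intro equalityI subsetI)
    fix A assume "A \<in> {A \<in> sym_mats (Suc n). P A}"
    then obtain a b C where "b \<in> carrier_vec n" "C \<in> sym_mats n" "A = border_mat n a b C" "P A"
      by (auto elim: sym_mats_SucE)
    then show "A \<in> (\<lambda>(a, b, C). border_mat n a b C) ` ?S" by force
  qed (auto intro: border_mat_sym_mats)
  moreover have "inj_on (\<lambda>(a, b, C). border_mat n a b C) ?S"
    by (auto simp: inj_on_def sym_mats_carrier dest!: border_mat_inj)
  ultimately have "card {A \<in> sym_mats (Suc n). P A} = card ?S" by (simp add: card_image)
  also have "\<dots> = (\<Sum>a\<in>UNIV. \<Sum>b\<in>carrier_vec n. card {C \<in> sym_mats n. P (border_mat n a b C)})"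
    by (simp add: card_SigmaI finite_SigmaI)
  finally show ?thesis .
qed

lemma sym_mats_congruence:
  fixes C U :: "'a :: comm_semiring_1 mat"
  assumes C: "C \<in> sym_mats n" and U: "U \<in> carrier_mat n n"
  shows "U * C * transpose_mat U \<in> sym_mats n"
proof -
  have C': "C \<in> carrier_mat n n" and CT: "transpose_mat C = C" using C by (auto simp: sym_mats_def)
  have UC: "U * C \<in> carrier_mat n n" using U C' by simp
  have "transpose_mat (U * C * transpose_mat U) = U * (transpose_mat C * transpose_mat U)"
    using transpose_mult[OF UC, of "transpose_mat U" n] transpose_mult[OF U C'] U by simp
  also have "\<dots> = U * C * transpose_mat U"
    using CT U C' by (simp add: assoc_mult_mat[of U n n C n "transpose_mat U" n])
  finally show ?thesis using U C' by (simp add: sym_mats_def)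
qed

lemma congruence_cancel:
  fixes C U U' :: "'a :: comm_semiring_1 mat"
  assumes C: "C \<in> carrier_mat n n" and U: "U \<in> carrier_mat n n" and U': "U' \<in> carrier_mat n n"
    and inv: "U' * U = 1\<^sub>m n"
  shows "U' * (U * C * transpose_mat U) * transpose_mat U' = C"
proof -
  have T: "transpose_mat U * transpose_mat U' = 1\<^sub>m n" using transpose_mult[OF U' U] inv by simp
  have "U' * (U * C * transpose_mat U) * transpose_mat U' = (U' * U) * C * (transpose_mat U * transpose_mat U')"
    using U U' C by (simp add: assoc_mult_mat[of _ n n _ n _ n])
  then show ?thesis using inv T C by simp
qed

section \<open>Counting symmetric matrices over F_2 by nullity\<close>

lemma UNIV_bit: "(UNIV :: bit set) = {0, 1}"
  by (auto intro: bit.exhaust)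

instance bit :: finite
  by standard (simp add: UNIV_bit)

lemma CARD_bit[simp]: "CARD(bit) = 2"
  by (simp add: UNIV_bit)

lemma one_plus_outer_mat_mult_vec:
  fixes w v :: "'a :: comm_semiring_1 vec"
  assumes w: "w \<in> carrier_vec n" and v: "v \<in> carrier_vec n" and x: "x \<in> carrier_vec n"
  shows "(1\<^sub>m n + outer_mat w v) *\<^sub>v x = x + (v \<bullet> x) \<cdot>\<^sub>v w"
  using x w v add_mult_distrib_mat_vec[of "1\<^sub>m n" n n "outer_mat w v" x]
  by (simp add: outer_mat_mult_vec)

lemma bit_transvection_involutive:
  fixes w v x :: "bit vec"
  assumes w: "w \<in> carrier_vec n" and v: "v \<in> carrier_vec n" and x: "x \<in> carrier_vec n"
    and vw: "v \<bullet> w = 0"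
  shows "(1\<^sub>m n + outer_mat w v) *\<^sub>v ((1\<^sub>m n + outer_mat w v) *\<^sub>v x) = x"
proof -
  note Ux = one_plus_outer_mat_mult_vec[OF w v]
  have "v \<bullet> (x + (v \<bullet> x) \<cdot>\<^sub>v w) = v \<bullet> x"
    using x v w vw by (simp add: scalar_prod_add_distrib[of _ n])
  then show ?thesis
    using x w by (simp add: Ux) (intro eq_vecI; simp add: add.assoc flip: distrib_right)
qed

lemma nonzero_bit_vec_to_unit_vecE:
  fixes b :: "bit vec"
  assumes b: "b \<in> carrier_vec (Suc n)" and b0: "b \<noteq> 0\<^sub>v (Suc n)"
  obtains U U' where "U \<in> carrier_mat (Suc n) (Suc n)" "U' \<in> carrier_mat (Suc n) (Suc n)"
    "U' * U = 1\<^sub>m (Suc n)" "U * U' = 1\<^sub>m (Suc n)" "U *\<^sub>v b = vCons 1 (0\<^sub>v n)"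
proof -
  let ?e = "unit_vec (Suc n) 0 :: bit vec"
  obtain j where j: "j < Suc n" "b $ j = 1"
    using b b0 by (metis bit_not_zero_iff eq_vecI carrier_vecD index_zero_vec)
  define w where "w = b + ?e"
  define v where "v = ?e + (1 + b $ 0) \<cdot>\<^sub>v unit_vec (Suc n) j"
  have w: "w \<in> carrier_vec (Suc n)" and v: "v \<in> carrier_vec (Suc n)"
    using b by (simp_all add: w_def v_def)
  have vx: "v \<bullet> x = x $ 0 + (1 + b $ 0) * x $ j" if "x \<in> carrier_vec (Suc n)" for x
    using that j by (simp add: v_def add_scalar_prod_distrib[of _ "Suc n"])
  have vb: "v \<bullet> b = 1" using vx[OF b] j by (cases "b $ 0") simp_all
  have vw: "v \<bullet> w = 0"
    using vx[OF w] b j by (cases "j = 0"; cases "b $ 0") (simp_all add: w_def)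
  \<comment> \<open>a transvection with v \<bullet> b = 1 and v \<bullet> w = 0, sending b to b + w = e_0\<close>
  define U where "U = 1\<^sub>m (Suc n) + outer_mat w v"
  have U: "U \<in> carrier_mat (Suc n) (Suc n)" using w v by (simp add: U_def)
  have Ux: "U *\<^sub>v x = x + (v \<bullet> x) \<cdot>\<^sub>v w" if "x \<in> carrier_vec (Suc n)" for x
    unfolding U_def using one_plus_outer_mat_mult_vec[OF w v that] .
  have UUx: "U *\<^sub>v (U *\<^sub>v x) = x" if "x \<in> carrier_vec (Suc n)" for x
    unfolding U_def using bit_transvection_involutive[OF w v that vw] .
  obtain U' where "U' \<in> carrier_mat (Suc n) (Suc n)" "U' * U = 1\<^sub>m (Suc n)" "U * U' = 1\<^sub>m (Suc n)"
  proof (rule invertible_mat_of_mult_vec_inj[OF U])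
    fix x assume "x \<in> carrier_vec (Suc n)" "U *\<^sub>v x = 0\<^sub>v (Suc n)"
    then show "x = 0\<^sub>v (Suc n)" using UUx U by (metis mult_mat_zero_vec)
  qed
  moreover have "U *\<^sub>v b = vCons 1 (0\<^sub>v n)"
    using b vb by (simp add: Ux w_def) (intro eq_vecI; simp add: vec_index_vCons add.assoc[symmetric])
  ultimately show ?thesis using that U by blast
qed

definition sym_nullity_count :: "nat \<Rightarrow> nat \<Rightarrow> nat" where
  \<comment> \<open>N(n, d): the kernel of a matrix over F_2 of nullity d has 2^d elements\<close>
  "sym_nullity_count n d = card {A \<in> sym_mats n :: bit mat set. card (mat_kernel A) = 2 ^ d}"

definition sym_border_nullity :: "nat \<Rightarrow> nat \<Rightarrow> bit \<Rightarrow> bit vec \<Rightarrow> bit mat set" where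
  "sym_border_nullity n d a b = {C \<in> sym_mats n. card (mat_kernel (border_mat n a b C)) = 2 ^ d}"

lemma sym_nullity_count_Suc:
  "sym_nullity_count (Suc n) d = (\<Sum>b\<in>carrier_vec n. card (sym_border_nullity n d 0 b))
     + (\<Sum>b\<in>carrier_vec n. card (sym_border_nullity n d 1 b))"
  unfolding sym_nullity_count_def sym_border_nullity_def card_sym_mats_Suc by (simp add: UNIV_bit)

lemma card_sym_border_nullity_one:
  assumes b: "b \<in> carrier_vec n"
  shows "card (sym_border_nullity n d 1 b) = sym_nullity_count n d"
proof -
  let ?O = "outer_mat b b"
  have O: "?O \<in> sym_mats n" using b by (intro sym_matsI) (auto simp: outer_mat_def mult.commute)
  have "bij_betw (\<lambda>C. C - ?O) (sym_border_nullity n d 1 b) {C \<in> sym_mats n. card (mat_kernel C) = 2 ^ d}"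
  proof (rule bij_betw_byWitness[where f' = "\<lambda>C. C + ?O"])
    have minus_sym: "C - ?O \<in> sym_mats n" and plus_sym: "C + ?O \<in> sym_mats n" if "C \<in> sym_mats n" for C
      using that O transpose_minus[of C n n ?O] transpose_add[of C n n ?O] by (auto simp: sym_mats_def)
    show "\<forall>C\<in>sym_border_nullity n d 1 b. C - ?O + ?O = C"
      "\<forall>C\<in>{C \<in> sym_mats n. card (mat_kernel C) = 2 ^ d}. C + ?O - ?O = C"
      using O by (auto simp: sym_border_nullity_def sym_mats_def intro!: eq_matI)
    show "(\<lambda>C. C - ?O) ` sym_border_nullity n d 1 b \<subseteq> {C \<in> sym_mats n. card (mat_kernel C) = 2 ^ d}"
      using minus_sym card_mat_kernel_border_mat_one[OF b]
      by (auto simp: sym_border_nullity_def sym_mats_carrier)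
    have "C + ?O - ?O = C" if "C \<in> sym_mats n" for C
      using that O by (auto simp: sym_mats_def intro!: eq_matI)
    then show "(\<lambda>C. C + ?O) ` {C \<in> sym_mats n. card (mat_kernel C) = 2 ^ d} \<subseteq> sym_border_nullity n d 1 b"
      using plus_sym card_mat_kernel_border_mat_one[OF b] O
      by (auto simp: sym_border_nullity_def sym_mats_carrier)
  qed
  then show ?thesis unfolding sym_nullity_count_def by (rule bij_betw_same_card)
qed

lemma card_sym_border_nullity_zero:
  "card (sym_border_nullity n d 0 (0\<^sub>v n)) = (if d = 0 then 0 else sym_nullity_count n (d - 1))"
proof -
  have "sym_border_nullity n d 0 (0\<^sub>v n) = {C \<in> sym_mats n. 2 * card (mat_kernel C) = 2 ^ d}"
    using card_mat_kernel_border_mat_zero sym_mats_carrier by (fastforce simp: sym_border_nullity_def)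
  then show ?thesis by (cases d) (simp_all add: sym_nullity_count_def)
qed

lemma card_sym_border_nullity_unit:
  "card (sym_border_nullity (Suc n) d 0 (vCons 1 (0\<^sub>v n))) = 2 ^ Suc n * sym_nullity_count n d"
proof -
  have "card {C \<in> sym_mats n. card (mat_kernel (border_mat (Suc n) 0 (vCons 1 (0\<^sub>v n)) (border_mat n c b C))) = 2 ^ d}
      = sym_nullity_count n d" if "b \<in> carrier_vec n" for c :: bit and b
  proof -
    have "{C \<in> sym_mats n. card (mat_kernel (border_mat (Suc n) 0 (vCons 1 (0\<^sub>v n)) (border_mat n c b C))) = 2 ^ d}
        = {C \<in> sym_mats n. card (mat_kernel C) = 2 ^ d}"
      using that by (auto simp: card_mat_kernel_border_mat_unit sym_mats_carrier)
    then show ?thesis by (simp add: sym_nullity_count_def)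
  qed
  then show ?thesis
    unfolding sym_border_nullity_def card_sym_mats_Suc by (simp add: card_carrier_vec)
qed

lemma card_sym_border_nullity_nonzero:
  assumes b: "b \<in> carrier_vec (Suc n)" and b0: "b \<noteq> 0\<^sub>v (Suc n)"
  shows "card (sym_border_nullity (Suc n) d 0 b) = card (sym_border_nullity (Suc n) d 0 (vCons 1 (0\<^sub>v n)))"
proof -
  obtain U U' where U: "U \<in> carrier_mat (Suc n) (Suc n)" and U': "U' \<in> carrier_mat (Suc n) (Suc n)"
    and inv1: "U' * U = 1\<^sub>m (Suc n)" and inv2: "U * U' = 1\<^sub>m (Suc n)" and Ub: "U *\<^sub>v b = vCons 1 (0\<^sub>v n)"
    by (rule nonzero_bit_vec_to_unit_vecE[OF b b0])
  let ?f = "\<lambda>C. U * C * transpose_mat U" and ?g = "\<lambda>C. U' * C * transpose_mat U'"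
  have kernel: "card (mat_kernel (border_mat (Suc n) 0 (vCons 1 (0\<^sub>v n)) (?f C)))
      = card (mat_kernel (border_mat (Suc n) 0 b C))" if "C \<in> sym_mats (Suc n)" for C
    using card_mat_kernel_border_mat_congruence[OF b sym_mats_carrier[OF that] U U' inv1 inv2] Ub by simp
  have "bij_betw ?f (sym_border_nullity (Suc n) d 0 b) (sym_border_nullity (Suc n) d 0 (vCons 1 (0\<^sub>v n)))"
  proof (rule bij_betw_byWitness[where f' = ?g])
    show "\<forall>C\<in>sym_border_nullity (Suc n) d 0 b. ?g (?f C) = C"
      using congruence_cancel[OF _ U U' inv1] sym_mats_carrier by (auto simp: sym_border_nullity_def)
    show "\<forall>C\<in>sym_border_nullity (Suc n) d 0 (vCons 1 (0\<^sub>v n)). ?f (?g C) = C"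
      using congruence_cancel[OF _ U' U inv2] sym_mats_carrier by (auto simp: sym_border_nullity_def)
    show "?f ` sym_border_nullity (Suc n) d 0 b \<subseteq> sym_border_nullity (Suc n) d 0 (vCons 1 (0\<^sub>v n))"
      using kernel sym_mats_congruence[OF _ U] by (auto simp: sym_border_nullity_def)
    show "?g ` sym_border_nullity (Suc n) d 0 (vCons 1 (0\<^sub>v n)) \<subseteq> sym_border_nullity (Suc n) d 0 b"
    proof clarify
      fix C assume C: "C \<in> sym_border_nullity (Suc n) d 0 (vCons 1 (0\<^sub>v n))"
      then have CS: "C \<in> sym_mats (Suc n)" by (simp add: sym_border_nullity_def)
      have "?f (?g C) = C" using congruence_cancel[OF sym_mats_carrier[OF CS] U' U inv2] .
      then show "?g C \<in> sym_border_nullity (Suc n) d 0 b"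
        using kernel[OF sym_mats_congruence[OF CS U']] C sym_mats_congruence[OF CS U']
        by (simp add: sym_border_nullity_def)
    qed
  qed
  then show ?thesis by (rule bij_betw_same_card)
qed

lemma sym_nullity_count_Suc_Suc:
  "sym_nullity_count (Suc (Suc n)) d = 2 ^ Suc n * sym_nullity_count (Suc n) d
     + (if d = 0 then 0 else sym_nullity_count (Suc n) (d - 1))
     + (2 ^ Suc n - 1) * (2 ^ Suc n * sym_nullity_count n d)"
proof -
  let ?V = "carrier_vec (Suc n) :: bit vec set"
  have "(\<Sum>b\<in>?V. card (sym_border_nullity (Suc n) d 0 b))
      = card (sym_border_nullity (Suc n) d 0 (0\<^sub>v (Suc n)))
        + (\<Sum>b\<in>?V - {0\<^sub>v (Suc n)}. card (sym_border_nullity (Suc n) d 0 b))"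
    by (rule sum.remove) simp_all
  also have "(\<Sum>b\<in>?V - {0\<^sub>v (Suc n)}. card (sym_border_nullity (Suc n) d 0 b))
      = (\<Sum>b\<in>?V - {0\<^sub>v (Suc n)}. 2 ^ Suc n * sym_nullity_count n d)"
    using card_sym_border_nullity_nonzero card_sym_border_nullity_unit by (intro sum.cong) auto
  also have "\<dots> = (2 ^ Suc n - 1) * (2 ^ Suc n * sym_nullity_count n d)"
    by (simp add: card_carrier_vec card_Diff_singleton)
  finally show ?thesis
    using sym_nullity_count_Suc[of "Suc n" d] card_sym_border_nullity_zero[of "Suc n" d]
      card_sym_border_nullity_one[of _ "Suc n" d]
    by (simp add: card_carrier_vec)
qed

lemma sym_nullity_count_dim_0: "sym_nullity_count 0 d = (if d = 0 then 1 else 0)"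
proof -
  have "sym_mats 0 = {1\<^sub>m 0 :: bit mat}" and "mat_kernel (1\<^sub>m 0 :: bit mat) = {0\<^sub>v 0}"
    by (auto simp: sym_mats_def mat_kernel_def intro!: eq_matI eq_vecI)
  then have "{A \<in> sym_mats 0 :: bit mat set. card (mat_kernel A) = 2 ^ d} = (if d = 0 then {1\<^sub>m 0} else {})"
    using one_less_power[of "2 :: nat" d] by auto
  then show ?thesis by (simp add: sym_nullity_count_def)
qed

lemma sym_nullity_count_dim_1: "sym_nullity_count 1 0 = 1" "sym_nullity_count 1 1 = 1"
proof -
  have "carrier_vec 0 = {0\<^sub>v 0 :: bit vec}" by (auto intro!: eq_vecI)
  then show "sym_nullity_count 1 0 = 1" "sym_nullity_count 1 1 = 1"
    using sym_nullity_count_Suc[of 0] card_sym_border_nullity_zero[of 0] card_sym_border_nullity_one[of _ 0]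
    by (simp_all add: sym_nullity_count_dim_0)
qed

lemma sym_nullity_count_Suc_Suc_real:
  "real (sym_nullity_count (Suc (Suc n)) d) = 2 ^ Suc n * real (sym_nullity_count (Suc n) d)
     + (if d = 0 then 0 else real (sym_nullity_count (Suc n) (d - 1)))
     + (2 ^ Suc n - 1) * 2 ^ Suc n * real (sym_nullity_count n d)"
  using sym_nullity_count_Suc_Suc[of n d] by (simp add: of_nat_diff del: power_Suc)

lemma u_Suc_even: "even n \<Longrightarrow> u (Suc n) = u n"
  unfolding u_def by (simp add: even_iff_mod_2_eq_zero)

lemma u_Suc_odd:
  assumes "odd n"
  shows "u (Suc n) = u n * (1 - 1 / 2 ^ n)"
proof -
  obtain p where n: "n = 2 * p + 1" using assms oddE by blast
  then have "Suc n div 2 = Suc p" "n div 2 = p" "1 - 2 * real (Suc p) = - real n" by auto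
  then show ?thesis
    unfolding u_def by (simp add: prod.cl_ivl_Suc powr_minus powr_realpow divide_inverse)
qed

lemma u_recurrence:
  "2 ^ Suc (Suc n) * u (Suc (Suc (Suc n))) = 2 ^ Suc n * u (Suc (Suc n)) + (2 ^ Suc n - 1) * u (Suc n)"
proof (cases "even n")
  case True
  then show ?thesis
    using u_Suc_odd[of "Suc n"] u_Suc_even[of "Suc (Suc n)"] by (simp add: field_simps)
next
  case False
  then show ?thesis
    using u_Suc_even[of "Suc n"] u_Suc_odd[of "Suc (Suc n)"] by (simp add: field_simps)
qed

lemma sym_nullity_count_nullity_0:
  "real (sym_nullity_count n 0) = 2 ^ (Suc n choose 2) * u (Suc n)"
proof (induction n rule: induct_nat_012)
  case 0
  then show ?case by (simp add: sym_nullity_count_dim_0 u_def numeral_2_eq_2)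
next
  case 1
  have "u 2 = 1 / 2" using u_Suc_odd[of 1] by (simp add: u_def numeral_2_eq_2)
  then show ?case using sym_nullity_count_dim_1 by (simp add: numeral_2_eq_2)
next
  case (ge2 n)
  define x :: real where "x = 2 ^ Suc n"
  define P :: real where "P = 2 ^ (Suc n choose 2)"
  have "Suc (Suc n) choose 2 = (Suc n choose 2) + Suc n"
    "Suc (Suc (Suc n)) choose 2 = (Suc n choose 2) + Suc n + Suc (Suc n)"
    by (simp_all add: numeral_2_eq_2)
  then have powers: "(2::real) ^ (Suc (Suc n) choose 2) = P * x"
    "(2::real) ^ (Suc (Suc (Suc n)) choose 2) = P * x * (2 * x)"
    by (simp_all add: P_def x_def power_add)
  have "real (sym_nullity_count (Suc (Suc n)) 0)
      = x * real (sym_nullity_count (Suc n) 0) + (x - 1) * x * real (sym_nullity_count n 0)"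
    using sym_nullity_count_Suc_Suc_real[of n 0] by (simp add: x_def)
  also have "\<dots> = P * x * (x * u (Suc (Suc n)) + (x - 1) * u (Suc n))"
    using ge2 powers by (simp add: P_def algebra_simps)
  also have "\<dots> = P * x * (2 * x) * u (Suc (Suc (Suc n)))"
    using u_recurrence[of n] by (simp add: x_def)
  finally show ?case using powers by simp
qed

lemma sym_nullity_count_nullity_1:
  "real (sym_nullity_count (Suc n) 1) = (2 ^ Suc n - 1) * real (sym_nullity_count n 0)"
proof (induction n rule: induct_nat_012)
  case 0
  then show ?case using sym_nullity_count_dim_0 sym_nullity_count_dim_1 by simp
next
  case 1
  then show ?case
    using sym_nullity_count_Suc_Suc_real[of 0 1] sym_nullity_count_dim_0 sym_nullity_count_dim_1 by simp
next
  case (ge2 n)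
  define x :: real where "x = 2 ^ Suc n"
  have IH: "real (sym_nullity_count (Suc n) 1) = (x - 1) * real (sym_nullity_count n 0)"
    "real (sym_nullity_count (Suc (Suc n)) 1) = (2 * x - 1) * real (sym_nullity_count (Suc n) 0)"
    using ge2 by (simp_all add: x_def)
  have rec0: "real (sym_nullity_count (Suc (Suc n)) 0)
      = x * real (sym_nullity_count (Suc n) 0) + (x - 1) * x * real (sym_nullity_count n 0)"
    using sym_nullity_count_Suc_Suc_real[of n 0] by (simp add: x_def)
  have "real (sym_nullity_count (Suc (Suc (Suc n))) 1)
      = 2 * x * real (sym_nullity_count (Suc (Suc n)) 1) + real (sym_nullity_count (Suc (Suc n)) 0)
        + (2 * x - 1) * (2 * x) * real (sym_nullity_count (Suc n) 1)"
    using sym_nullity_count_Suc_Suc_real[of "Suc n" 1] by (simp add: x_def)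
  also have "\<dots> = (4 * x - 1) * real (sym_nullity_count (Suc (Suc n)) 0)"
    unfolding IH rec0 by (simp add: algebra_simps)
  finally show ?case by (simp add: x_def)
qed

section \<open>Symmetric matrices with zero row sums\<close>

lemma card_sym_mats_ones_vec_kernel_nullity_2:
  "card {A \<in> sym_mats (Suc n) :: bit mat set. A *\<^sub>v ones_vec (Suc n) = 0\<^sub>v (Suc n) \<and> card (mat_kernel A) = 4}
    = sym_nullity_count n 1"
proof -
  define f :: "bit mat \<Rightarrow> bit mat" where
    "f B = border_mat n (ones_vec n \<bullet> (B *\<^sub>v ones_vec n)) (- (B *\<^sub>v ones_vec n)) B" for B
  have f: "f B \<in> sym_mats (Suc n)" "f B *\<^sub>v ones_vec (Suc n) = 0\<^sub>v (Suc n)"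
    "card (mat_kernel (f B)) = 2 * card (mat_kernel B)" if "B \<in> sym_mats n" for B
    using that border_mat_sym_mats[of "- (B *\<^sub>v ones_vec n)" n B]
      border_mat_mult_ones_vec_eq_0_iff[of "- (B *\<^sub>v ones_vec n)" n B]
      card_mat_kernel_border_mat_row_sums[of B n]
    by (auto simp: f_def sym_mats_def)
  have "{A \<in> sym_mats (Suc n). A *\<^sub>v ones_vec (Suc n) = 0\<^sub>v (Suc n) \<and> card (mat_kernel A) = 4}
      = f ` {B \<in> sym_mats n. card (mat_kernel B) = 2}"
  proof (intro equalityI subsetI)
    fix A :: "bit mat"
    assume "A \<in> {A \<in> sym_mats (Suc n). A *\<^sub>v ones_vec (Suc n) = 0\<^sub>v (Suc n) \<and> card (mat_kernel A) = 4}"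
    then obtain a b and C :: "bit mat"
      where A: "A = border_mat n a b C" and b: "b \<in> carrier_vec n" and C: "C \<in> sym_mats n"
      and ones: "A *\<^sub>v ones_vec (Suc n) = 0\<^sub>v (Suc n)" and four: "card (mat_kernel A) = 4"
      by (auto elim: sym_mats_SucE)
    have "A = f C"
      using ones border_mat_mult_ones_vec_eq_0_iff[OF b sym_mats_carrier[OF C]] unfolding A f_def by simp
    then show "A \<in> f ` {B \<in> sym_mats n. card (mat_kernel B) = 2}" using four f(3)[OF C] C by auto
  qed (use f in auto)
  moreover have "inj_on f (sym_mats n)"
  proof (rule inj_onI)
    fix B B' assume "B \<in> sym_mats n" "B' \<in> sym_mats n" and eq: "f B = f B'"
    then have "B \<in> carrier_mat n n" "B' \<in> carrier_mat n n" by (simp_all add: sym_mats_carrier)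
    then show "B = B'" using border_mat_inj[OF eq[unfolded f_def]] by simp
  qed
  ultimately show ?thesis
    unfolding sym_nullity_count_def by (simp add: card_image inj_on_subset[of f "sym_mats n"])
qed

theorem mainTheorem8:
  fixes k :: nat
  assumes "k \<ge> 2"
  shows "real (card {A :: bit mat. A \<in> carrier_mat k k \<and> transpose_mat A = A
              \<and> vec_space.rank k A = k - 2
              \<and> (\<forall>i<k. (\<Sum>j<k. A $$ (i, j)) = 0)})
         = 2 ^ ((k - 1) choose 2) * u (k - 1) * (2 ^ (k - 1) - 1)"
proof -
  obtain n where k: "k = Suc (Suc n)" using assms by (metis add_2_eq_Suc le_Suc_ex)
  let ?B = "{A :: bit mat. A \<in> carrier_mat k k \<and> transpose_mat A = A \<and> vec_space.rank k A = k - 2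
      \<and> (\<forall>i<k. (\<Sum>j<k. A $$ (i, j)) = 0)}"
  have "?B = {A \<in> sym_mats (Suc (Suc n)).
      A *\<^sub>v ones_vec (Suc (Suc n)) = 0\<^sub>v (Suc (Suc n)) \<and> card (mat_kernel A) = 4}"
    using rank_eq_iff_card_mat_kernel[of _ k k 2] row_sums_eq_0_iff_mult_ones_vec[of _ k k] assms
    unfolding k by (auto simp: sym_mats_def)
  then have "real (card ?B) = (2 ^ Suc n - 1) * (2 ^ (Suc n choose 2) * u (Suc n))"
    using card_sym_mats_ones_vec_kernel_nullity_2 sym_nullity_count_nullity_1 sym_nullity_count_nullity_0
    by simp
  then show ?thesis unfolding k by simp
qed

end
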